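(* Let $\bar U_K^*:=\{x\in\mathcal E^K:\ x\cdot v\ge0\ \text{for all } v\in\bar U_K\}$. Then \[ \bar U_K^*=\Big\{x\in\mathcal E^K:\ \sum_{\ell=k}^K x_\ell\ge0\ \text{for all } k\in\{1,\dots,K\}\Big\}, \] and \[ \bar U_K=\{v\in\mathcal E^K:\ x\cdot v\ge0\ \text{for all } x\in\bar U_K^*\}. \]
   Context: Fix integers $D,K\ge1$. Either $\mathcal C=(0,\infty)^D$, $\bar{\mathcal C}=\mathbb{R}_+^D$, $\mathcal E=\mathbb{R}^D$ with the Euclidean inner product, or $\bar{\mathcal C}=S^D_+$ (positive semidefinite symmetric $D\times D$ matrices), $\mathcal E=S^D$ (symmetric matrices) with $a\cdot b=\mathrm{tr}(a^*b)$. For $x,y\in\mathcal E$, $x\le y$ means $y-x\in\bar{\mathcal C}$ (so "$\ge0$" means membership in $\bar{\mathcal C}$). $\bar U_K=\{x=(x_1,\dots,x_K)\in\bar{\mathcal C}^K: x_1\le\dots\le x_K\}$, and on $\mathcal E^K$, $x\cdot y=\sum_{k=1}^K x_k\cdot y_k$. *)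

theory Defs
  imports "HOL-Analysis.Analysis"
begin

text \<open>K-tuples (x_1,...,x_K) in E^K are represented as functions nat => 'a,
  only the indices 1..K being relevant. The ambient space E is a set E (a subspace of
  the HOL type), the closed cone Cbar is a set C, and x <= y means y - x in C.\<close>

definition tuple_inner :: "nat \<Rightarrow> (nat \<Rightarrow> 'a::real_inner) \<Rightarrow> (nat \<Rightarrow> 'a) \<Rightarrow> real" where
  "tuple_inner K x y = (\<Sum>k=1..K. inner (x k) (y k))"

definition Ubar :: "'a::real_vector set \<Rightarrow> nat \<Rightarrow> (nat \<Rightarrow> 'a) set" where
  "Ubar C K = {x. (\<forall>k\<in>{1..K}. x k \<in> C) \<and> (\<forall>k\<in>{1..<K}. x (Suc k) - x k \<in> C)}"

definition Ustar :: "'a::real_inner set \<Rightarrow> 'a set \<Rightarrow> nat \<Rightarrow> (nat \<Rightarrow> 'a) set" where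
  "Ustar E C K = {x. (\<forall>k\<in>{1..K}. x k \<in> E) \<and> (\<forall>v\<in>Ubar C K. 0 \<le> tuple_inner K x v)}"

definition orthant :: "(real^'d) set" where
  "orthant = {x. \<forall>i. 0 \<le> x $ i}"

text \<open>Case 2: E = S^D (symmetric matrices), Cbar = S^D_+; the inner product on
  real^'d^'d is sum_{i,j} a_ij b_ij = tr(a^* b).\<close>
definition symmat :: "(real^'d^'d) set" where
  "symmat = {A. transpose A = A}"

definition psdmat :: "(real^'d^'d) set" where
  "psdmat = {A. transpose A = A \<and> (\<forall>v. 0 \<le> v \<bullet> (A *v v))}"

end

theory Submission
  imports Defs
begin

text \<open>Summation by parts gives x \<bullet> v = \<Sum>k. (x_k + ... + x_K) \<bullet> (v_k - v_(k-1)) with v_0 = 0,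
  and for v in Ubar all these increments lie in the cone. Both cones in question are self-dual
  within their ambient space, so the tail sums of x lie in the cone exactly when x is in Ubar*,
  and testing v against the tuples c e_k and c (e_(k+1) - e_k) of Ubar* recovers the conditions
  defining Ubar. Self-duality of the positive semidefinite cone rests on Fejer's theorem
  tr(AB) \<ge> 0, proved by peeling off rank-one terms w w^T / a through successive Schur
  complements.\<close>

definition increment :: "(nat \<Rightarrow> 'a::ab_group_add) \<Rightarrow> nat \<Rightarrow> 'a" where
  "increment v k = (if k = 1 then v 1 else v k - v (k - 1))"

lemma sum_increment: "1 \<le> l \<Longrightarrow> (\<Sum>k=1..l. increment v k) = v l"
proof (induction l rule: dec_induct)
  case base then show ?case by (simp add: increment_def)
next
  case (step l) then show ?case by (simp add: increment_def)
qed

lemma sum_inner_tail_sums: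
  fixes x d :: "nat \<Rightarrow> 'a::real_inner"
  shows "(\<Sum>l=1..n. inner (x l) (\<Sum>k=1..l. d k)) = (\<Sum>k=1..n. inner (\<Sum>l=k..n. x l) (d k))"
proof -
  have "(\<Sum>l=1..n. inner (x l) (\<Sum>k=1..l. d k))
      = (\<Sum>l\<in>{1..n}. \<Sum>k\<in>{k\<in>{1..n}. k \<le> l}. inner (x l) (d k))"
    by (intro sum.cong) (auto simp: inner_sum_right intro: sum.cong)
  also have "\<dots> = (\<Sum>k\<in>{1..n}. \<Sum>l\<in>{l\<in>{1..n}. k \<le> l}. inner (x l) (d k))"
    by (rule sum.swap_restrict) auto
  also have "\<dots> = (\<Sum>k=1..n. inner (\<Sum>l=k..n. x l) (d k))"
    by (intro sum.cong) (auto simp: inner_sum_left intro: sum.cong)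
  finally show ?thesis .
qed

lemma tuple_inner_increment:
  "tuple_inner K x v = (\<Sum>k=1..K. inner (\<Sum>l=k..K. x l) (increment v k))"
proof -
  have "tuple_inner K x v = (\<Sum>l=1..K. inner (x l) (\<Sum>k=1..l. increment v k))"
    unfolding tuple_inner_def by (intro sum.cong refl) (metis atLeastAtMost_iff sum_increment)
  then show ?thesis by (simp only: sum_inner_tail_sums)
qed

lemma increment_mem_Ubar:
  assumes v: "v \<in> Ubar C K" and k: "k \<in> {1..K}"
  shows "increment v k \<in> C"
proof (cases "k = 1")
  case True
  then show ?thesis using v k by (simp add: Ubar_def increment_def)
next
  case False
  then have "k - 1 \<in> {1..<K}" and k_eq: "Suc (k - 1) = k" using k by auto
  then have "v (Suc (k - 1)) - v (k - 1) \<in> C"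
    using v unfolding Ubar_def by blast
  then show ?thesis using False k_eq by (simp add: increment_def)
qed

lemma tuple_inner_add_left:
  "tuple_inner K (\<lambda>l. x l + y l) w = tuple_inner K x w + tuple_inner K y w"
  by (simp add: tuple_inner_def inner_add_left sum.distrib)

lemma tuple_inner_single:
  assumes "k \<in> {1..K}"
  shows "tuple_inner K ((\<lambda>_. 0)(k := c)) w = inner c (w k)"
proof -
  have "tuple_inner K ((\<lambda>_. 0)(k := c)) w = (\<Sum>l\<in>{1..K}. if l = k then inner c (w l) else 0)"
    unfolding tuple_inner_def by (intro sum.cong) auto
  then show ?thesis using assms by simp
qed

lemma tuple_inner_step:
  assumes "k \<in> {1..<K}"
  shows "tuple_inner K ((\<lambda>_. 0)(k := - c, Suc k := c)) w = inner c (w (Suc k) - w k)"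
proof -
  have "(\<lambda>_. 0)(k := - c, Suc k := c) = (\<lambda>l. ((\<lambda>_. 0)(Suc k := c)) l + ((\<lambda>_. 0)(k := - c)) l)"
    by auto
  then have "tuple_inner K ((\<lambda>_. 0)(k := - c, Suc k := c)) w
      = tuple_inner K ((\<lambda>_. 0)(Suc k := c)) w + tuple_inner K ((\<lambda>_. 0)(k := - c)) w"
    by (simp only: tuple_inner_add_left)
  also have "\<dots> = inner c (w (Suc k)) + inner (- c) (w k)"
    using assms by (simp add: tuple_inner_single del: fun_upd_apply)
  finally show ?thesis by (simp add: inner_diff_right)
qed

locale self_dual_cone =
  fixes E C :: "'a::real_inner set"
  assumes subspace_E: "subspace E"
    and self_dual: "C = {a \<in> E. \<forall>c\<in>C. 0 \<le> inner a c}"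
begin

lemma mem_cone_iff: "a \<in> C \<longleftrightarrow> a \<in> E \<and> (\<forall>c\<in>C. 0 \<le> inner a c)"
  using self_dual by blast

lemma cone_subset: "C \<subseteq> E"
  using mem_cone_iff by blast

lemma inner_nonneg: "a \<in> C \<Longrightarrow> b \<in> C \<Longrightarrow> 0 \<le> inner a b"
  using mem_cone_iff by blast

lemma zero_mem_cone: "0 \<in> C"
  by (rule mem_cone_iff[THEN iffD2]) (simp add: subspace_0[OF subspace_E])

lemma Ustar_eq:
  "Ustar E C K = {x. (\<forall>k\<in>{1..K}. x k \<in> E) \<and> (\<forall>k\<in>{1..K}. (\<Sum>l=k..K. x l) \<in> C)}"
proof (intro set_eqI iffI)
  fix x assume "x \<in> Ustar E C K"
  then have xE: "\<forall>k\<in>{1..K}. x k \<in> E" and dual: "\<forall>v\<in>Ubar C K. 0 \<le> tuple_inner K x v"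
    by (auto simp: Ustar_def)
  have "(\<Sum>l=k..K. x l) \<in> C" if k: "k \<in> {1..K}" for k
    unfolding mem_cone_iff
  proof (intro conjI ballI)
    show "(\<Sum>l=k..K. x l) \<in> E"
      using xE k by (intro subspace_sum[OF subspace_E]) auto
    fix c assume c: "c \<in> C"
    define v where "v l = (if k \<le> l then c else 0)" for l
    have "v \<in> Ubar C K"
      using c zero_mem_cone by (auto simp: Ubar_def v_def)
    moreover have "tuple_inner K x v = (\<Sum>l=k..K. inner (x l) c)"
      unfolding tuple_inner_def v_def using k by (intro sum.mono_neutral_cong_right) auto
    ultimately have "0 \<le> (\<Sum>l=k..K. inner (x l) c)"
      using dual by metis
    then show "0 \<le> inner (\<Sum>l=k..K. x l) c"
      by (simp add: inner_sum_left)
  qed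
  with xE show "x \<in> {x. (\<forall>k\<in>{1..K}. x k \<in> E) \<and> (\<forall>k\<in>{1..K}. (\<Sum>l=k..K. x l) \<in> C)}"
    by simp
next
  fix x assume "x \<in> {x. (\<forall>k\<in>{1..K}. x k \<in> E) \<and> (\<forall>k\<in>{1..K}. (\<Sum>l=k..K. x l) \<in> C)}"
  then have xE: "\<forall>k\<in>{1..K}. x k \<in> E" and tails: "\<forall>k\<in>{1..K}. (\<Sum>l=k..K. x l) \<in> C"
    by auto
  have "0 \<le> tuple_inner K x v" if "v \<in> Ubar C K" for v
    unfolding tuple_inner_increment
    using tails increment_mem_Ubar[OF that] by (auto intro!: sum_nonneg inner_nonneg)
  with xE show "x \<in> Ustar E C K"
    by (simp add: Ustar_def)
qed

lemma Ubar_eq_dual: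
  "Ubar C K = {v. (\<forall>k\<in>{1..K}. v k \<in> E) \<and> (\<forall>x\<in>Ustar E C K. 0 \<le> tuple_inner K x v)}"
proof (intro set_eqI iffI)
  fix v assume "v \<in> Ubar C K"
  then show "v \<in> {v. (\<forall>k\<in>{1..K}. v k \<in> E) \<and> (\<forall>x\<in>Ustar E C K. 0 \<le> tuple_inner K x v)}"
    using cone_subset by (auto simp: Ubar_def Ustar_def)
next
  fix v assume "v \<in> {v. (\<forall>k\<in>{1..K}. v k \<in> E) \<and> (\<forall>x\<in>Ustar E C K. 0 \<le> tuple_inner K x v)}"
  then have vE: "\<And>k. k \<in> {1..K} \<Longrightarrow> v k \<in> E"
    and dual: "\<And>x. x \<in> Ustar E C K \<Longrightarrow> 0 \<le> tuple_inner K x v"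
    by auto
  have test_mem_Ustar: "x \<in> Ustar E C K"
    if "\<And>l. x l \<in> E" and "\<And>w. w \<in> Ubar C K \<Longrightarrow> 0 \<le> tuple_inner K x w" for x
    using that by (simp add: Ustar_def)
  have E0: "0 \<in> E" and Eneg: "\<And>c. c \<in> C \<Longrightarrow> - c \<in> E"
    using subspace_0[OF subspace_E] subspace_neg[OF subspace_E] cone_subset by auto
  have "v k \<in> C" if k: "k \<in> {1..K}" for k
    unfolding mem_cone_iff
  proof (intro conjI ballI)
    show "v k \<in> E" using vE k .
    fix c assume c: "c \<in> C"
    have "(\<lambda>_. 0)(k := c) \<in> Ustar E C K"
    proof (rule test_mem_Ustar)
      show "((\<lambda>_. 0)(k := c)) l \<in> E" for l
        using c cone_subset E0 by auto
      show "0 \<le> tuple_inner K ((\<lambda>_. 0)(k := c)) w" if "w \<in> Ubar C K" for w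
        using that k c by (simp add: tuple_inner_single Ubar_def inner_nonneg)
    qed
    then show "0 \<le> inner (v k) c"
      using dual k by (fastforce simp: tuple_inner_single inner_commute)
  qed
  moreover have "v (Suc k) - v k \<in> C" if k: "k \<in> {1..<K}" for k
    unfolding mem_cone_iff
  proof (intro conjI ballI)
    show "v (Suc k) - v k \<in> E"
      using vE k by (intro subspace_diff[OF subspace_E]) auto
    fix c assume c: "c \<in> C"
    have "(\<lambda>_. 0)(k := - c, Suc k := c) \<in> Ustar E C K"
    proof (rule test_mem_Ustar)
      show "((\<lambda>_. 0)(k := - c, Suc k := c)) l \<in> E" for l
        using c cone_subset E0 Eneg by auto
      show "0 \<le> tuple_inner K ((\<lambda>_. 0)(k := - c, Suc k := c)) w" if "w \<in> Ubar C K" for w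
        using that k c by (simp add: tuple_inner_step Ubar_def inner_nonneg)
    qed
    then show "0 \<le> inner (v (Suc k) - v k) c"
      using dual k by (fastforce simp: tuple_inner_step inner_commute)
  qed
  ultimately show "v \<in> Ubar C K"
    by (simp add: Ubar_def)
qed

end

lemma self_dual_cone_orthant: "self_dual_cone UNIV (orthant :: (real^'n) set)"
proof
  show "subspace (UNIV :: (real^'n) set)" by (rule subspace_UNIV)
  have "a \<in> orthant \<longleftrightarrow> (\<forall>c\<in>orthant. 0 \<le> inner a c)" for a :: "real^'n"
  proof
    show "a \<in> orthant \<Longrightarrow> \<forall>c\<in>orthant. 0 \<le> inner a c"
      by (auto simp: orthant_def inner_vec_def intro!: sum_nonneg)
    assume "\<forall>c\<in>orthant. 0 \<le> inner a c"
    moreover have "axis i 1 \<in> orthant" for i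
      by (simp add: orthant_def axis_def)
    ultimately show "a \<in> orthant"
      by (fastforce simp: orthant_def inner_axis)
  qed
  then show "(orthant :: (real^'n) set) = {a \<in> UNIV. \<forall>c\<in>orthant. 0 \<le> inner a c}"
    by blast
qed

definition outer_prod :: "real^'n \<Rightarrow> real^'n^'n" where
  "outer_prod u = (\<chi> i j. u$i * u$j)"

lemma inner_outer_prod: "inner A (outer_prod u) = u \<bullet> (A *v u)"
  by (simp add: inner_vec_def outer_prod_def matrix_vector_mult_def sum_distrib_left mult_ac)

lemma outer_prod_mult_vec: "outer_prod w *v v = (w \<bullet> v) *\<^sub>R w"
  by (simp add: vec_eq_iff outer_prod_def matrix_vector_mult_def inner_vec_def sum_distrib_left mult_ac)

lemma subspace_symmat: "subspace symmat"
  by (auto simp: subspace_def symmat_def vec_eq_iff transpose_def)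

lemma outer_prod_symmat: "outer_prod u \<in> symmat"
  by (simp add: symmat_def vec_eq_iff transpose_def outer_prod_def mult.commute)

lemma outer_prod_psd: "outer_prod u \<in> psdmat"
proof -
  have "v \<bullet> (outer_prod u *v v) = (u \<bullet> v)\<^sup>2" for v
    by (simp add: outer_prod_mult_vec power2_eq_square inner_commute)
  then show ?thesis
    using outer_prod_symmat by (simp add: psdmat_def symmat_def)
qed

lemma inner_symmetric_matrix:
  fixes A :: "real^'n^'n"
  assumes "transpose A = A"
  shows "y \<bullet> (A *v x) = x \<bullet> (A *v y)"
  by (metis assms dot_lmul_matrix inner_commute vector_transpose_matrix)

lemma quadratic_form_add:
  fixes A :: "real^'n^'n"
  assumes "transpose A = A"
  shows "(x + y) \<bullet> (A *v (x + y)) = x \<bullet> (A *v x) + 2 * (x \<bullet> (A *v y)) + y \<bullet> (A *v y)"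
  using inner_symmetric_matrix[OF assms, of y x]
  by (simp add: matrix_vector_right_distrib inner_add_left inner_add_right)

lemma inner_axis_matrix_axis: "axis i 1 \<bullet> (A *v axis j 1) = (A::real^'n^'n)$i$j"
  by (simp add: inner_axis' matrix_vector_mult_basis column_def)

lemma psd_diag_nonneg:
  assumes "A \<in> psdmat"
  shows "0 \<le> A$i$i"
proof -
  have "0 \<le> axis i 1 \<bullet> (A *v axis i 1)"
    using assms unfolding psdmat_def by blast
  then show ?thesis by (simp only: inner_axis_matrix_axis)
qed

lemma psd_zero_diag_imp_zero_row:
  fixes A :: "real^'n^'n"
  assumes A: "A \<in> psdmat" and Aii: "A$i$i = 0"
  shows "A$i$j = 0"
proof (rule ccontr)
  assume nz: "A$i$j \<noteq> 0"
  define t where "t = - (A$j$j + 1) / (2 * A$i$j)"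
  have "0 \<le> (t *\<^sub>R axis i 1 + axis j 1) \<bullet> (A *v (t *\<^sub>R axis i 1 + axis j 1))"
    using A by (simp add: psdmat_def)
  also have "\<dots> = 2 * t * A$i$j + A$j$j"
    using A Aii by (simp add: psdmat_def quadratic_form_add matrix_vector_mult_scaleR inner_axis_matrix_axis)
  also have "\<dots> = -1"
    using nz by (simp add: t_def field_simps)
  finally show False by simp
qed

text \<open>With w the i-th column of A, the quadratic form of the Schur complement at v equals that
  of A at v - ((w \<bullet> v) / A_ii) e_i.\<close>
lemma psd_pivot_complement:
  fixes A :: "real^'n^'n"
  assumes A: "A \<in> psdmat" and a: "0 < A$i$i"
  shows "A - (1 / A$i$i) *\<^sub>R outer_prod (column i A) \<in> psdmat"
proof -
  define w where "w = column i A"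
  define A' where "A' = A - (1 / A$i$i) *\<^sub>R outer_prod w"
  have sym: "transpose A = A" and pos: "\<And>v. 0 \<le> v \<bullet> (A *v v)"
    using A by (auto simp: psdmat_def)
  have "0 \<le> v \<bullet> (A' *v v)" for v
  proof -
    have wv: "v \<bullet> (A *v axis i 1) = w \<bullet> v"
      by (simp add: w_def matrix_vector_mult_basis inner_commute)
    have "v \<bullet> (A' *v v) = v \<bullet> (A *v v) - (w \<bullet> v)\<^sup>2 / A$i$i"
      by (simp add: A'_def matrix_vector_mult_diff_rdistrib scaleR_matrix_vector_assoc[symmetric]
          outer_prod_mult_vec inner_diff_right power2_eq_square inner_commute)
    also have "\<dots> = v \<bullet> (A *v v) + 2 * (- (w \<bullet> v) / A$i$i) * (w \<bullet> v) + (- (w \<bullet> v) / A$i$i)\<^sup>2 * A$i$i"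
      using a by (simp add: field_simps power2_eq_square)
    also have "\<dots> = (v + (- (w \<bullet> v) / A$i$i) *\<^sub>R axis i 1) \<bullet> (A *v (v + (- (w \<bullet> v) / A$i$i) *\<^sub>R axis i 1))"
      by (simp only: quadratic_form_add[OF sym] matrix_vector_mult_scaleR inner_scaleR_left
          inner_scaleR_right inner_axis_matrix_axis wv power2_eq_square mult.assoc)
    finally show ?thesis using pos by simp
  qed
  moreover have "A' \<in> symmat"
    unfolding A'_def using sym outer_prod_symmat
    by (intro subspace_diff[OF subspace_symmat] subspace_scale[OF subspace_symmat]) (auto simp: symmat_def)
  ultimately show ?thesis
    by (simp add: psdmat_def symmat_def A'_def w_def)
qed

lemma psd_inner_nonneg:
  fixes A B :: "real^'n^'n"
  assumes "A \<in> psdmat" and B: "B \<in> psdmat"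
  shows "0 \<le> inner A B"
  using assms(1)
proof (induction "card {i. A$i$i \<noteq> 0}" arbitrary: A rule: less_induct)
  case less
  show ?case
  proof (cases "\<exists>i. A$i$i \<noteq> 0")
    case False
    then have "A = 0"
      using psd_zero_diag_imp_zero_row[OF less.prems] by (simp add: vec_eq_iff)
    then show ?thesis by simp
  next
    case True
    then obtain i where "A$i$i \<noteq> 0" by blast
    then have a: "0 < A$i$i"
      using psd_diag_nonneg[OF less.prems] by (simp add: order_less_le)
    define w where "w = column i A"
    define A' where "A' = A - (1 / A$i$i) *\<^sub>R outer_prod w"
    have A': "A' \<in> psdmat"
      unfolding A'_def w_def using less.prems a by (rule psd_pivot_complement)
    have diag: "A'$j$j = A$j$j - (A$j$i)\<^sup>2 / A$i$i" for j
      by (simp add: A'_def w_def outer_prod_def column_def power2_eq_square)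
    have "{j. A'$j$j \<noteq> 0} \<subset> {j. A$j$j \<noteq> 0}"
    proof
      have "A'$j$j = 0" if "A$j$j = 0" for j
        using psd_zero_diag_imp_zero_row[OF less.prems that, of i] that by (simp add: diag)
      then show "{j. A'$j$j \<noteq> 0} \<subseteq> {j. A$j$j \<noteq> 0}"
        by blast
      have "A'$i$i = 0"
        using diag[of i] a by (simp add: power2_eq_square)
      then show "{j. A'$j$j \<noteq> 0} \<noteq> {j. A$j$j \<noteq> 0}"
        using \<open>A$i$i \<noteq> 0\<close> by blast
    qed
    then have "0 \<le> inner A' B"
      by (intro less.hyps A' psubset_card_mono) auto
    moreover have "inner A B = inner A' B + (1 / A$i$i) * inner (outer_prod w) B"
      by (simp add: A'_def inner_diff_left)
    moreover have "inner (outer_prod w) B = w \<bullet> (B *v w)"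
      by (metis inner_commute inner_outer_prod)
    moreover have "0 \<le> w \<bullet> (B *v w)"
      using B by (simp add: psdmat_def)
    ultimately show ?thesis
      using a by simp
  qed
qed

lemma self_dual_cone_psdmat: "self_dual_cone symmat (psdmat :: (real^'n^'n) set)"
proof
  show "subspace (symmat :: (real^'n^'n) set)"
    by (rule subspace_symmat)
  have "a \<in> psdmat \<longleftrightarrow> a \<in> symmat \<and> (\<forall>c\<in>psdmat. 0 \<le> inner a c)" for a :: "real^'n^'n"
  proof
    show "a \<in> psdmat \<Longrightarrow> a \<in> symmat \<and> (\<forall>c\<in>psdmat. 0 \<le> inner a c)"
      by (auto simp: psdmat_def symmat_def intro: psd_inner_nonneg)
    assume a: "a \<in> symmat \<and> (\<forall>c\<in>psdmat. 0 \<le> inner a c)"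
    then have "0 \<le> v \<bullet> (a *v v)" for v
      using outer_prod_psd[of v] by (metis inner_outer_prod)
    with a show "a \<in> psdmat"
      by (simp add: psdmat_def symmat_def)
  qed
  then show "(psdmat :: (real^'n^'n) set) = {a \<in> symmat. \<forall>c\<in>psdmat. 0 \<le> inner a c}"
    by blast
qed

theorem lemma3p3:
  fixes K :: nat
  assumes "K \<ge> 1"
  shows "(Ustar (UNIV :: (real^'d) set) orthant K
            = {x. (\<forall>k\<in>{1..K}. x k \<in> UNIV) \<and> (\<forall>k\<in>{1..K}. (\<Sum>l=k..K. x l) \<in> orthant)}
          \<and> Ubar (orthant :: (real^'d) set) K
            = {v. (\<forall>k\<in>{1..K}. v k \<in> UNIV) \<and> (\<forall>x\<in>Ustar UNIV orthant K. 0 \<le> tuple_inner K x v)})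
       \<and> (Ustar (symmat :: (real^'d^'d) set) psdmat K
            = {x. (\<forall>k\<in>{1..K}. x k \<in> symmat) \<and> (\<forall>k\<in>{1..K}. (\<Sum>l=k..K. x l) \<in> psdmat)}
          \<and> Ubar (psdmat :: (real^'d^'d) set) K
            = {v. (\<forall>k\<in>{1..K}. v k \<in> symmat) \<and> (\<forall>x\<in>Ustar symmat psdmat K. 0 \<le> tuple_inner K x v)})"
  by (intro conjI self_dual_cone.Ustar_eq self_dual_cone.Ubar_eq_dual
      self_dual_cone_orthant self_dual_cone_psdmat)

end
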